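(* Let $G$ be a graph, $S\subseteq V(G)$, and $C$ a connected component of $G$, and suppose we are given a proper $2$-coloring (with colors white and black) of $C$. Let $G'$ be the graph obtained from $G$ by replacing $C$ with a star (with a new center vertex) whose ray vertices (leaves) are the vertices of $C\cap S$, and then subdividing those star edges whose ray vertex is black in the $2$-coloring. Then $B_G(S)=B_{G'}(S)$.
   Context: For a graph $G$ and $S\subseteq V(G)$, $B_G(S)$ is the set of subsets $S'\subseteq S$ such that there is a bipartition of $G$ (a proper $2$-coloring) with all vertices of $S'$ in one part and all vertices of $S\setminus S'$ in the other. If $G$ is not bipartite, $B_G(S)=\emptyset$. *)

theory Defs
  imports Main
begin

definition graph :: "'a set \<Rightarrow> 'a set set \<Rightarrow> bool" where
  "graph V E \<longleftrightarrow> finite V \<and> (\<forall>e\<in>E. \<exists>u v. u \<noteq> v \<and> u \<in> V \<and> v \<in> V \<and> e = {u, v})"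

definition adj :: "'a set set \<Rightarrow> 'a \<Rightarrow> 'a \<Rightarrow> bool" where
  "adj E u v \<longleftrightarrow> {u, v} \<in> E"

definition component :: "'a set \<Rightarrow> 'a set set \<Rightarrow> 'a set \<Rightarrow> bool" where
  "component V E C \<longleftrightarrow> (\<exists>v\<in>V. C = {u. (adj E)\<^sup>*\<^sup>* v u})"

definition bipartition :: "'a set \<Rightarrow> 'a set set \<Rightarrow> 'a set \<Rightarrow> 'a set \<Rightarrow> bool" where
  "bipartition V E A B \<longleftrightarrow> A \<union> B = V \<and> A \<inter> B = {} \<and>
     (\<forall>e\<in>E. e \<inter> A \<noteq> {} \<and> e \<inter> B \<noteq> {})"

definition Bset :: "'a set \<Rightarrow> 'a set set \<Rightarrow> 'a set \<Rightarrow> 'a set set" where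
  "Bset V E S = {S'. S' \<subseteq> S \<and> (\<exists>A B. bipartition V E A B \<and> S' \<subseteq> A \<and> S - S' \<subseteq> B)}"

text \<open>A proper 2-coloring of the component C: col x = True means black, False white.\<close>
definition proper_col_on :: "'a set set \<Rightarrow> 'a set \<Rightarrow> ('a \<Rightarrow> bool) \<Rightarrow> bool" where
  "proper_col_on E C col \<longleftrightarrow> (\<forall>u\<in>C. \<forall>v\<in>C. {u, v} \<in> E \<longrightarrow> col u \<noteq> col v)"

definition star_V :: "'a set \<Rightarrow> 'a set \<Rightarrow> 'a set \<Rightarrow> ('a \<Rightarrow> bool) \<Rightarrow> 'a \<Rightarrow> ('a \<Rightarrow> 'a) \<Rightarrow> 'a set" where
  "star_V V C S col c sub =
     (V - C) \<union> (C \<inter> S) \<union> {c} \<union> sub ` {x \<in> C \<inter> S. col x}"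

definition star_E :: "'a set set \<Rightarrow> 'a set \<Rightarrow> 'a set \<Rightarrow> ('a \<Rightarrow> bool) \<Rightarrow> 'a \<Rightarrow> ('a \<Rightarrow> 'a) \<Rightarrow> 'a set set" where
  "star_E E C S col c sub =
     {e \<in> E. e \<inter> C = {}}
     \<union> {{c, x} | x. x \<in> C \<inter> S \<and> \<not> col x}
     \<union> {{c, sub x} | x. x \<in> C \<inter> S \<and> col x}
     \<union> {{sub x, x} | x. x \<in> C \<inter> S \<and> col x}"

end

theory Submission
  imports Defs
begin

text \<open>A proper 2-colouring of G is determined on the connected component C by a single bit:
  it agrees with col or with its complement. In G' the star with its subdivided edges
  forces every white ray to get the colour opposite to the centre and every black ray the
  colour of the centre, so a 2-colouring of G' is also determined on C \<inter> S by one bit.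
  Since G and G' coincide outside C, the traces of their 2-colourings on S coincide.\<close>

lemma proper_col_onI:
  assumes "\<And>e. e \<in> E \<Longrightarrow> \<exists>u w. e = {u, w} \<and> f u \<noteq> f w"
  shows "proper_col_on E V f"
  unfolding proper_col_on_def
proof (intro ballI impI)
  fix x y assume "{x, y} \<in> E"
  then obtain u w where "{x, y} = {u, w}" "f u \<noteq> f w"
    using assms by blast
  then show "f x \<noteq> f y"
    by (auto simp: doubleton_eq_iff)
qed

lemma proper_col_on_subset:
  assumes "proper_col_on E V f" "C \<subseteq> V"
  shows "proper_col_on E C f"
  using assms unfolding proper_col_on_def by blast

lemma bipartition_imp_proper_col_on:
  assumes "bipartition V E A B"
  shows "proper_col_on E V (\<lambda>x. x \<in> A)"
  using assms unfolding bipartition_def proper_col_on_def by auto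

lemma proper_col_on_imp_bipartition:
  assumes "graph V E" "proper_col_on E V f"
  shows "bipartition V E {x \<in> V. f x} {x \<in> V. \<not> f x}"
  unfolding bipartition_def
proof (intro conjI ballI)
  fix e assume "e \<in> E"
  then obtain u w where "e = {u, w}" "u \<in> V" "w \<in> V"
    using assms(1) unfolding graph_def by blast
  moreover have "f u \<noteq> f w"
    using assms(2) \<open>e \<in> E\<close> calculation unfolding proper_col_on_def by blast
  ultimately show "e \<inter> {x \<in> V. f x} \<noteq> {}" "e \<inter> {x \<in> V. \<not> f x} \<noteq> {}"
    by auto
qed auto

lemma Bset_eq_proper_col_on:
  assumes "graph V E" "S \<subseteq> V"
  shows "Bset V E S = {{x \<in> S. f x} | f. proper_col_on E V f}"
proof safe
  fix S' assume "S' \<in> Bset V E S"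
  then obtain A B where S': "S' \<subseteq> S" "S' \<subseteq> A" "S - S' \<subseteq> B" and AB: "bipartition V E A B"
    unfolding Bset_def by auto
  have "A \<inter> B = {}"
    using AB unfolding bipartition_def by simp
  with S' have "S' = {x \<in> S. x \<in> A}"
    by auto
  then show "\<exists>f. S' = {x \<in> S. f x} \<and> proper_col_on E V f"
    using bipartition_imp_proper_col_on[OF AB] by auto
next
  fix f assume "proper_col_on E V f"
  then have "bipartition V E {x \<in> V. f x} {x \<in> V. \<not> f x}"
    using proper_col_on_imp_bipartition[OF assms(1)] by blast
  moreover have "{x \<in> S. f x} \<subseteq> {x \<in> V. f x}" "S - {x \<in> S. f x} \<subseteq> {x \<in> V. \<not> f x}"
    using assms(2) by auto
  ultimately show "{x \<in> S. f x} \<in> Bset V E S"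
    unfolding Bset_def by blast
qed

lemma component_subset:
  assumes "graph V E" "component V E C"
  shows "C \<subseteq> V"
proof -
  obtain v where v: "v \<in> V" "C = {u. (adj E)\<^sup>*\<^sup>* v u}"
    using assms(2) unfolding component_def by blast
  have "u \<in> V" if "(adj E)\<^sup>*\<^sup>* v u" for u
    using that
  proof (induction rule: rtranclp_induct)
    case (step y z)
    then show ?case
      using assms(1) unfolding graph_def adj_def by (fastforce simp: doubleton_eq_iff)
  qed (fact v(1))
  then show ?thesis
    using v(2) by blast
qed

lemma component_edge_closed:
  assumes "component V E C" "{u, w} \<in> E" "u \<in> C"
  shows "w \<in> C"
proof -
  obtain v where "C = {u. (adj E)\<^sup>*\<^sup>* v u}"
    using assms(1) unfolding component_def by blast
  moreover have "adj E u w"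
    using assms(2) unfolding adj_def .
  ultimately show ?thesis
    using assms(3) by (auto intro: rtranclp.rtrancl_into_rtrancl)
qed

lemma proper_col_on_component_unique:
  assumes "component V E C" "proper_col_on E C f" "proper_col_on E C g"
  shows "\<exists>b. \<forall>x\<in>C. f x = (g x = b)"
proof -
  obtain v where C: "C = {u. (adj E)\<^sup>*\<^sup>* v u}"
    using assms(1) unfolding component_def by blast
  have "f u = (g u = (f v = g v))" if "(adj E)\<^sup>*\<^sup>* v u" for u
    using that
  proof (induction rule: rtranclp_induct)
    case (step y z)
    have "{y, z} \<in> E" "y \<in> C"
      using step.hyps C unfolding adj_def by auto
    moreover from this have "z \<in> C"
      using assms(1) component_edge_closed by metis
    ultimately have "f y \<noteq> f z" "g y \<noteq> g z"
      using assms(2,3) unfolding proper_col_on_def by blast+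
    then show ?case
      using step.IH by auto
  qed auto
  then show ?thesis
    using C by blast
qed

lemma star_E_cases [consumes 1, case_names old white center black]:
  assumes "e \<in> star_E E C S col c sub"
  obtains "e \<in> E" "e \<inter> C = {}"
    | x where "e = {c, x}" "x \<in> C \<inter> S" "\<not> col x"
    | x where "e = {c, sub x}" "x \<in> C \<inter> S" "col x"
    | x where "e = {sub x, x}" "x \<in> C \<inter> S" "col x"
  using assms unfolding star_E_def by blast

locale star_replacement =
  fixes V :: "'a set" and E :: "'a set set" and S C :: "'a set"
    and col :: "'a \<Rightarrow> bool" and c :: 'a and sub :: "'a \<Rightarrow> 'a"
  assumes graph: "graph V E"
    and S_subset: "S \<subseteq> V"
    and component: "component V E C"
    and col: "proper_col_on E C col"
    and c_fresh: "c \<notin> V"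
    and sub_fresh: "\<forall>x\<in>C \<inter> S. col x \<longrightarrow> sub x \<notin> V \<and> sub x \<noteq> c"
begin

abbreviation "V' \<equiv> star_V V C S col c sub"
abbreviation "E' \<equiv> star_E E C S col c sub"

lemma C_subset: "C \<subseteq> V"
  using component_subset[OF graph component] .

lemma graph_star: "graph V' E'"
  unfolding graph_def
proof (intro conjI ballI)
  show "finite V'"
    using graph S_subset finite_subset unfolding graph_def star_V_def by auto
next
  fix e assume "e \<in> E'"
  then show "\<exists>u w. u \<noteq> w \<and> u \<in> V' \<and> w \<in> V' \<and> e = {u, w}"
  proof (cases rule: star_E_cases)
    case old
    then obtain u w where "u \<noteq> w" "u \<in> V" "w \<in> V" "e = {u, w}"
      using graph unfolding graph_def by blast
    with old show ?thesis
      unfolding star_V_def by blast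
  next
    case (white x)
    have "c \<noteq> x" "x \<in> V'" "c \<in> V'"
      using white C_subset c_fresh unfolding star_V_def by auto
    with white show ?thesis
      by (intro exI[of _ c] exI[of _ x]) simp
  next
    case (center x)
    have "c \<noteq> sub x" "sub x \<in> V'" "c \<in> V'"
      using center sub_fresh unfolding star_V_def by auto
    with center show ?thesis
      by (intro exI[of _ c] exI[of _ "sub x"]) simp
  next
    case (black x)
    have "sub x \<notin> V" "x \<in> V"
      using black C_subset sub_fresh by auto
    moreover have "sub x \<in> V'" "x \<in> V'"
      using black unfolding star_V_def by auto
    ultimately show ?thesis
      using black by (intro exI[of _ "sub x"] exI[of _ x]) auto
  qed
qed

lemma S_subset_star_V: "S \<subseteq> V'"
  using S_subset unfolding star_V_def by blast

lemma star_col_ray: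
  assumes "proper_col_on E' V' f'" "x \<in> C \<inter> S"
  shows "f' x = (col x = f' c)"
proof -
  have V': "c \<in> V'" "x \<in> V'" "col x \<Longrightarrow> sub x \<in> V'"
    using assms(2) unfolding star_V_def by auto
  show ?thesis
  proof (cases "col x")
    case False
    then have "{c, x} \<in> E'"
      unfolding star_E_def using assms(2) by blast
    then show ?thesis
      using assms(1) V' False unfolding proper_col_on_def by auto
  next
    case True
    then have "{c, sub x} \<in> E'" "{sub x, x} \<in> E'"
      unfolding star_E_def using assms(2) by blast+
    then have "f' c \<noteq> f' (sub x)" "f' (sub x) \<noteq> f' x"
      using assms(1) V' True unfolding proper_col_on_def by blast+
    then show ?thesis
      using True by auto
  qed
qed

lemma proper_col_on_star_extend:
  assumes "proper_col_on E V f"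
  obtains f' where "proper_col_on E' V' f'" "\<forall>x\<in>S. f' x = f x"
proof -
  obtain b where b: "\<forall>x\<in>C. f x = (col x = b)"
    using proper_col_on_component_unique[OF component _ col]
      proper_col_on_subset[OF assms C_subset] by blast
  define f' where "f' y = (if y \<in> V then f y else if y = c then b else \<not> b)" for y
  have "proper_col_on E' V' f'"
  proof (rule proper_col_onI)
    fix e assume "e \<in> E'"
    then show "\<exists>u w. e = {u, w} \<and> f' u \<noteq> f' w"
    proof (cases rule: star_E_cases)
      case old
      then obtain u w where "u \<in> V" "w \<in> V" "e = {u, w}"
        using graph unfolding graph_def by blast
      moreover from this have "f u \<noteq> f w"
        using assms old(1) unfolding proper_col_on_def by blast
      ultimately show ?thesis
        unfolding f'_def by (intro exI[of _ u] exI[of _ w]) simp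
    next
      case (white x)
      then have "f' c = b" "f' x = (\<not> b)"
        using b C_subset c_fresh unfolding f'_def by auto
      with white show ?thesis
        by (intro exI[of _ c] exI[of _ x]) simp
    next
      case (center x)
      then have "f' c = b" "f' (sub x) = (\<not> b)"
        using sub_fresh c_fresh unfolding f'_def by auto
      with center show ?thesis
        by (intro exI[of _ c] exI[of _ "sub x"]) simp
    next
      case (black x)
      then have "f' (sub x) = (\<not> b)" "f' x = b"
        using b C_subset sub_fresh unfolding f'_def by auto
      with black show ?thesis
        by (intro exI[of _ "sub x"] exI[of _ x]) simp
    qed
  qed
  moreover have "\<forall>x\<in>S. f' x = f x"
    using S_subset unfolding f'_def by auto
  ultimately show ?thesis
    by (rule that)
qed

lemma proper_col_on_star_restrict:
  assumes "proper_col_on E' V' f'"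
  obtains f where "proper_col_on E V f" "\<forall>x\<in>S. f x = f' x"
proof -
  define f where "f y = (if y \<in> C then col y = f' c else f' y)" for y
  have "proper_col_on E V f"
    unfolding proper_col_on_def
  proof (intro ballI impI)
    fix u w assume uw: "u \<in> V" "w \<in> V" "{u, w} \<in> E"
    have same_side: "w \<in> C \<longleftrightarrow> u \<in> C"
      using component_edge_closed[OF component] uw(3) by (metis insert_commute)
    show "f u \<noteq> f w"
    proof (cases "u \<in> C")
      case True
      with same_side have "col u \<noteq> col w"
        using col uw(3) unfolding proper_col_on_def by blast
      with True same_side show ?thesis
        unfolding f_def by auto
    next
      case False
      with same_side have "{u, w} \<in> E'" "u \<in> V'" "w \<in> V'"
        using uw unfolding star_E_def star_V_def by auto
      with False same_side show ?thesis
        using assms unfolding proper_col_on_def f_def by auto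
    qed
  qed
  moreover have "\<forall>x\<in>S. f x = f' x"
    using star_col_ray[OF assms] unfolding f_def by auto
  ultimately show ?thesis
    by (rule that)
qed

lemma Bset_star_eq: "Bset V E S = Bset V' E' S"
  unfolding Bset_eq_proper_col_on[OF graph S_subset]
    Bset_eq_proper_col_on[OF graph_star S_subset_star_V]
proof safe
  fix f assume "proper_col_on E V f"
  then obtain f' where "proper_col_on E' V' f'" "\<forall>x\<in>S. f' x = f x"
    by (rule proper_col_on_star_extend)
  then show "\<exists>f'. {x \<in> S. f x} = {x \<in> S. f' x} \<and> proper_col_on E' V' f'"
    by auto
next
  fix f' assume "proper_col_on E' V' f'"
  then obtain f where "proper_col_on E V f" "\<forall>x\<in>S. f x = f' x"
    by (rule proper_col_on_star_restrict)
  then show "\<exists>f. {x \<in> S. f' x} = {x \<in> S. f x} \<and> proper_col_on E V f"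
    by auto
qed

end

theorem lemma5p4:
  fixes V :: "'a set" and E :: "'a set set" and S C :: "'a set"
    and col :: "'a \<Rightarrow> bool" and c :: 'a and sub :: "'a \<Rightarrow> 'a"
  assumes "graph V E"
    and "S \<subseteq> V"
    and "component V E C"
    and "proper_col_on E C col"
    and "c \<notin> V"
    and "\<forall>x\<in>C \<inter> S. col x \<longrightarrow> sub x \<notin> V \<and> sub x \<noteq> c"
    and "inj_on sub {x \<in> C \<inter> S. col x}"
  shows "Bset V E S = Bset (star_V V C S col c sub) (star_E E C S col c sub) S"
proof -
  interpret star_replacement V E S C col c sub
    using assms(1-6) by unfold_locales
  show ?thesis
    by (fact Bset_star_eq)
qed

end
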